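(* Let $P$ be a graph, let $S$ be as defined below, and let $R=V(P)\setminus(S\cup N(S))$. Assume that the induced subgraph $P[R]$ has no isolated vertices. Then (1) $P[R]$ has a spanning subgraph isomorphic to a disjoint union of edges and odd cycles; and (2) for every vertex $x\in R$, the graph $P[R\setminus\{x\}]$ has a spanning subgraph isomorphic to a disjoint union of edges and odd cycles.
   Context: All graphs are finite, simple and undirected. For $S\subseteq V(P)$, $N(S)=\bigcup_{v\in S}N(v)$ (open neighborhood), $N(\emptyset)=\emptyset$. Let $I(P)$ be the set of isolated vertices of $P$. $S$ is an independent set $S\subseteq V(P)\setminus I(P)$ that maximizes $|S|-|N(S)|$, chosen, among all maximizers, to maximize $|S|$ (possibly $S=\emptyset$). Then $S$, $N(S)$, $R$ partition $V(P)$. *)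

theory Defs
  imports Main
begin

definition simple_graph :: "'a set \<Rightarrow> ('a \<Rightarrow> 'a \<Rightarrow> bool) \<Rightarrow> bool" where
  "simple_graph V E \<longleftrightarrow> finite V \<and> (\<forall>x y. E x y \<longrightarrow> x \<in> V \<and> y \<in> V)
     \<and> (\<forall>x y. E x y \<longrightarrow> E y x) \<and> (\<forall>x. \<not> E x x)"

definition nbhd :: "'a set \<Rightarrow> ('a \<Rightarrow> 'a \<Rightarrow> bool) \<Rightarrow> 'a set \<Rightarrow> 'a set" where
  "nbhd V E S = {y \<in> V. \<exists>x\<in>S. E x y}"

definition isolated_vertices :: "'a set \<Rightarrow> ('a \<Rightarrow> 'a \<Rightarrow> bool) \<Rightarrow> 'a set" where
  "isolated_vertices V E = {v \<in> V. \<forall>u. \<not> E v u}"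

definition independent :: "('a \<Rightarrow> 'a \<Rightarrow> bool) \<Rightarrow> 'a set \<Rightarrow> bool" where
  "independent E S \<longleftrightarrow> (\<forall>x\<in>S. \<forall>y\<in>S. \<not> E x y)"

definition admissible :: "'a set \<Rightarrow> ('a \<Rightarrow> 'a \<Rightarrow> bool) \<Rightarrow> 'a set \<Rightarrow> bool" where
  "admissible V E S \<longleftrightarrow> S \<subseteq> V - isolated_vertices V E \<and> independent E S"

definition surplus :: "'a set \<Rightarrow> ('a \<Rightarrow> 'a \<Rightarrow> bool) \<Rightarrow> 'a set \<Rightarrow> int" where
  "surplus V E S = int (card S) - int (card (nbhd V E S))"

definition optimal_set :: "'a set \<Rightarrow> ('a \<Rightarrow> 'a \<Rightarrow> bool) \<Rightarrow> 'a set \<Rightarrow> bool" where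
  "optimal_set V E S \<longleftrightarrow> admissible V E S
     \<and> (\<forall>T. admissible V E T \<longrightarrow> surplus V E T \<le> surplus V E S)
     \<and> (\<forall>T. admissible V E T \<longrightarrow> surplus V E T = surplus V E S \<longrightarrow> card T \<le> card S)"

definition edge_or_odd_cycle :: "('a \<Rightarrow> 'a \<Rightarrow> bool) \<Rightarrow> 'a list \<Rightarrow> bool" where
  "edge_or_odd_cycle E xs \<longleftrightarrow> distinct xs \<and>
     ((length xs = 2 \<and> E (xs ! 0) (xs ! 1)) \<or>
      (length xs \<ge> 3 \<and> odd (length xs) \<and>
       (\<forall>i < length xs. E (xs ! i) (xs ! ((i + 1) mod length xs)))))"

text \<open>The induced subgraph P[W] has a spanning subgraph isomorphic to a disjoint union of
  edges and odd cycles: W is partitioned into vertex sets of pieces, each an edge or odd cycle of P.\<close>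
definition has_edge_odd_cycle_cover :: "('a \<Rightarrow> 'a \<Rightarrow> bool) \<Rightarrow> 'a set \<Rightarrow> bool" where
  "has_edge_odd_cycle_cover E W \<longleftrightarrow> (\<exists>C :: 'a list set.
     (\<forall>c\<in>C. edge_or_odd_cycle E c) \<and>
     (\<forall>c\<in>C. \<forall>d\<in>C. c \<noteq> d \<longrightarrow> set c \<inter> set d = {}) \<and>
     (\<Union>c\<in>C. set c) = W)"

end

theory Submission
  imports Defs "HOL-Combinatorics.Orbits"
begin

(* If S is optimal, every nonempty independent T \<subseteq> R has
   |N_R(T)| > |T|: otherwise S \<union> T would be admissible with at least the same surplus and
   more vertices. Hence for W = R and W = R - {x} every independent T \<subseteq> W has |N_W(T)| \<ge> |T|.
   For arbitrary X \<subseteq> W, the vertices of X with a neighbour in X lie in N_W(X) and the others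
   are independent, so Hall's condition holds for the neighbourhoods N_W(v), v \<in> W. A system of
   distinct representatives is a permutation of W moving every vertex to a neighbour; its
   cycles have length at least 2, and splitting the even ones into edges gives the cover. *)

lemma has_edge_odd_cycle_cover_empty: "has_edge_odd_cycle_cover E {}"
  unfolding has_edge_odd_cycle_cover_def by (intro exI[of _ "{}"]) auto

lemma has_edge_odd_cycle_cover_piece:
  "edge_or_odd_cycle E c \<Longrightarrow> has_edge_odd_cycle_cover E (set c)"
  unfolding has_edge_odd_cycle_cover_def by (intro exI[of _ "{c}"]) auto

lemma has_edge_odd_cycle_cover_Union:
  assumes covered: "\<forall>W\<in>F. has_edge_odd_cycle_cover E W"
    and disjoint: "\<forall>W\<in>F. \<forall>W'\<in>F. W \<noteq> W' \<longrightarrow> W \<inter> W' = {}"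
  shows "has_edge_odd_cycle_cover E (\<Union>F)"
proof -
  obtain C where C: "\<forall>W\<in>F. (\<forall>c\<in>C W. edge_or_odd_cycle E c)
      \<and> (\<forall>c\<in>C W. \<forall>d\<in>C W. c \<noteq> d \<longrightarrow> set c \<inter> set d = {}) \<and> (\<Union>c\<in>C W. set c) = W"
    using bchoice[OF covered[unfolded has_edge_odd_cycle_cover_def]] by blast
  show ?thesis
    unfolding has_edge_odd_cycle_cover_def
  proof (intro exI[of _ "\<Union>W\<in>F. C W"] conjI)
    show "\<forall>c\<in>(\<Union>W\<in>F. C W). \<forall>d\<in>(\<Union>W\<in>F. C W). c \<noteq> d \<longrightarrow> set c \<inter> set d = {}"
    proof (intro ballI impI)
      fix c d assume "c \<in> (\<Union>W\<in>F. C W)" "d \<in> (\<Union>W\<in>F. C W)" "c \<noteq> d"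
      then obtain W W' where W: "W \<in> F" "W' \<in> F" "c \<in> C W" "d \<in> C W'" by blast
      show "set c \<inter> set d = {}"
      proof (cases "W = W'")
        case True
        then show ?thesis using C W \<open>c \<noteq> d\<close> by blast
      next
        case False
        have "set c \<subseteq> W" "set d \<subseteq> W'"
          using C W by blast+
        then show ?thesis using disjoint W(1,2) False by blast
      qed
    qed
  qed (use C in auto)
qed

lemma has_edge_odd_cycle_cover_Un:
  "\<lbrakk>has_edge_odd_cycle_cover E A; has_edge_odd_cycle_cover E B; A \<inter> B = {}\<rbrakk>
    \<Longrightarrow> has_edge_odd_cycle_cover E (A \<union> B)"
  using has_edge_odd_cycle_cover_Union[of "{A, B}" E] by auto

lemma has_edge_odd_cycle_cover_even_path:
  fixes k :: nat
  assumes "inj_on g {..<2*k}" and "\<forall>i<k. E (g (2*i)) (g (2*i+1))"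
  shows "has_edge_odd_cycle_cover E (g ` {..<2*k})"
  using assms
proof (induction k)
  case 0
  then show ?case by (simp add: has_edge_odd_cycle_cover_empty)
next
  case (Suc k)
  have split: "{..<2 * Suc k} = {..<2*k} \<union> {2*k, 2*k+1}" by auto
  have "inj_on g {..<2*k}"
    using Suc.prems(1) by (rule inj_on_subset) auto
  have "g (2*k) \<noteq> g (2*k+1)"
    using inj_onD[OF Suc.prems(1), of "2*k" "2*k+1"] by auto
  have "g ` {..<2*k} \<inter> g ` {2*k, 2*k+1} = {}"
    using Suc.prems(1) by (subst inj_on_image_Int[symmetric]) (auto simp: split)
  moreover have "has_edge_odd_cycle_cover E (set [g (2*k), g (2*k+1)])"
    using \<open>g (2*k) \<noteq> g (2*k+1)\<close> Suc.prems(2)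
    by (intro has_edge_odd_cycle_cover_piece) (simp add: edge_or_odd_cycle_def)
  moreover have "has_edge_odd_cycle_cover E (g ` {..<2*k})"
    using Suc.IH \<open>inj_on g {..<2*k}\<close> Suc.prems(2) by simp
  ultimately show ?case
    unfolding split image_Un by (intro has_edge_odd_cycle_cover_Un) auto
qed

lemma has_edge_odd_cycle_cover_cycle:
  assumes inj: "inj_on g {..<n}" and "2 \<le> n"
    and adj: "\<forall>i<n. E (g i) (g (Suc i mod n))"
  shows "has_edge_odd_cycle_cover E (g ` {..<n})"
proof (cases "odd n")
  case True
  have "edge_or_odd_cycle E (map g [0..<n])"
    using True \<open>2 \<le> n\<close> inj adj
    by (auto simp: edge_or_odd_cycle_def distinct_map lessThan_atLeast0 elim: oddE)
  from has_edge_odd_cycle_cover_piece[OF this] show ?thesis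
    by (simp add: lessThan_atLeast0)
next
  case False
  then obtain k where n: "n = 2*k" by (auto elim: evenE)
  have "\<forall>i<k. E (g (2*i)) (g (2*i+1))"
    using adj n by (auto elim: allE[of _ "2*_"])
  then show ?thesis
    using inj n has_edge_odd_cycle_cover_even_path by blast
qed

lemma has_edge_odd_cycle_cover_cyclic_on:
  assumes "cyclic_on p W" and along_edges: "\<forall>v\<in>W. E v (p v)" and loopfree: "\<forall>v. \<not> E v v"
  shows "has_edge_odd_cycle_cover E W"
proof -
  obtain v where "v \<in> W" and W: "W = orbit p v"
    using assms(1) by (auto simp: cyclic_on_def)
  then have v: "v \<in> orbit p v" by simp
  define g where "g = (\<lambda>k. (p ^^ k) v)"
  define n where "n = funpow_dist1 p v v"
  have W_eq: "W = g ` {..<n}"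
    using orbit_conv_funpow_dist1[OF v] by (simp add: W g_def n_def lessThan_atLeast0)
  have inj: "inj_on g {..<n}"
    using inj_on_funpow_dist1[OF v] by (simp add: g_def n_def lessThan_atLeast0)
  have "g n = v"
    using funpow_dist1_prop[OF v] by (simp add: g_def n_def)
  have "n \<noteq> 1"
  proof
    assume "n = 1"
    then have "p v = v" using \<open>g n = v\<close> by (simp add: g_def)
    then show False using along_edges loopfree \<open>v \<in> W\<close> by metis
  qed
  then have "2 \<le> n" by (simp add: n_def)
  have "g (Suc i mod n) = p (g i)" if "i < n" for i
    using that \<open>g n = v\<close> by (cases "Suc i = n") (auto simp: g_def)
  moreover have "g i \<in> W" if "i < n" for i
    using that W_eq by blast
  ultimately have "\<forall>i<n. E (g i) (g (Suc i mod n))"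
    using along_edges by auto
  then show ?thesis
    using has_edge_odd_cycle_cover_cycle[OF inj \<open>2 \<le> n\<close>] W_eq by simp
qed

lemma has_edge_odd_cycle_cover_permutes:
  assumes "p permutes W" "finite W" "\<forall>v\<in>W. E v (p v)" "\<forall>v. \<not> E v v"
  shows "has_edge_odd_cycle_cover E W"
proof -
  obtain C where C: "\<forall>c\<in>C. cyclic_on p c" "\<Union>C = W"
    "\<forall>c\<in>C. \<forall>c'\<in>C. c \<noteq> c' \<longrightarrow> c \<inter> c' = {}"
    using permutes_decompose[OF assms(1,2)] by blast
  have "\<forall>c\<in>C. has_edge_odd_cycle_cover E c"
    using C(1,2) assms(3,4) by (blast intro: has_edge_odd_cycle_cover_cyclic_on)
  with C(2,3) show ?thesis
    using has_edge_odd_cycle_cover_Union by metis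
qed

definition hall_condition :: "'i set \<Rightarrow> ('i \<Rightarrow> 'b set) \<Rightarrow> bool" where
  "hall_condition I A \<longleftrightarrow> (\<forall>J\<subseteq>I. card J \<le> card (\<Union>(A ` J)))"

lemma hall_condition_subset: "hall_condition I A \<Longrightarrow> J \<subseteq> I \<Longrightarrow> hall_condition J A"
  by (auto simp: hall_condition_def)

lemma hall_condition_Diff_tight:
  assumes "finite I" "\<forall>i\<in>I. finite (A i)" "hall_condition I A" "J \<subseteq> I"
    and tight: "card (\<Union>(A ` J)) = card J"
  shows "hall_condition (I - J) (\<lambda>i. A i - \<Union>(A ` J))"
  unfolding hall_condition_def
proof (intro allI impI)
  fix K assume K: "K \<subseteq> I - J"
  have "finite J"
    using assms(1,4) by (rule rev_finite_subset)
  then have fin: "finite K" "finite J" "finite (\<Union>(A ` J))"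
    using K assms(1,2,4) by (auto intro: rev_finite_subset)
  have split: "\<Union>(A ` (K \<union> J)) = (\<Union>i\<in>K. A i - \<Union>(A ` J)) \<union> \<Union>(A ` J)"
    by blast
  have "card K + card J = card (K \<union> J)"
    using K fin by (subst card_Un_disjoint) auto
  also have "\<dots> \<le> card (\<Union>(A ` (K \<union> J)))"
    using assms(3) \<open>J \<subseteq> I\<close> K unfolding hall_condition_def by blast
  also have "\<dots> \<le> card (\<Union>i\<in>K. A i - \<Union>(A ` J)) + card (\<Union>(A ` J))"
    unfolding split by (rule card_Un_le)
  finally show "card K \<le> card (\<Union>i\<in>K. A i - \<Union>(A ` J))"
    using tight by linarith
qed

lemma hall_condition_Diff_singleton:
  assumes "hall_condition I A" and no_tight: "\<nexists>J. J \<subset> I \<and> J \<noteq> {} \<and> card (\<Union>(A ` J)) = card J"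
    and "i \<in> I"
  shows "hall_condition (I - {i}) (\<lambda>j. A j - {a})"
  unfolding hall_condition_def
proof (intro allI impI)
  fix K assume K: "K \<subseteq> I - {i}"
  show "card K \<le> card (\<Union>j\<in>K. A j - {a})"
  proof (cases "K = {}")
    case False
    then have "K \<subset> I" "K \<noteq> {}"
      using K \<open>i \<in> I\<close> by blast+
    then have "card K \<le> card (\<Union>(A ` K))" "card (\<Union>(A ` K)) \<noteq> card K"
      using assms(1) no_tight unfolding hall_condition_def by auto
    moreover have "card (\<Union>(A ` K)) - 1 \<le> card (\<Union>(A ` K) - {a})"
      by (simp add: card_Diff_singleton_if)
    moreover have "(\<Union>j\<in>K. A j - {a}) = \<Union>(A ` K) - {a}" by blast
    ultimately show ?thesis by simp
  qed simp
qed

definition has_sdr :: "'i set \<Rightarrow> ('i \<Rightarrow> 'b set) \<Rightarrow> bool" where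
  "has_sdr I A \<longleftrightarrow> (\<exists>f. inj_on f I \<and> (\<forall>i\<in>I. f i \<in> A i))"

lemma inj_on_If_disjoint_images:
  assumes "inj_on f J" "inj_on g (I - J)" "f ` J \<inter> g ` (I - J) = {}"
  shows "inj_on (\<lambda>i. if i \<in> J then f i else g i) I"
proof -
  let ?h = "\<lambda>i. if i \<in> J then f i else g i"
  have "inj_on ?h J" "inj_on ?h (I - J)"
    using assms(1,2) unfolding inj_on_def by auto
  moreover have "?h ` (J - (I - J)) \<inter> ?h ` (I - J - J) = {}"
    using assms(3) by auto
  ultimately have "inj_on ?h (J \<union> (I - J))"
    by (simp only: inj_on_Un)
  then show ?thesis
    by (rule inj_on_subset) blast
qed

lemma has_sdr_Diff_Union:
  assumes "has_sdr J A" and "has_sdr (I - J) (\<lambda>i. A i - \<Union>(A ` J))"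
  shows "has_sdr I A"
proof -
  obtain f g where f: "inj_on f J" "\<forall>i\<in>J. f i \<in> A i"
    and g: "inj_on g (I - J)" "\<forall>i\<in>I - J. g i \<in> A i - \<Union>(A ` J)"
    using assms unfolding has_sdr_def by blast
  have "f ` J \<subseteq> \<Union>(A ` J)" "g ` (I - J) \<inter> \<Union>(A ` J) = {}"
    using f(2) g(2) by blast+
  then have "inj_on (\<lambda>i. if i \<in> J then f i else g i) I"
    using f(1) g(1) by (intro inj_on_If_disjoint_images) blast+
  moreover have "\<forall>i\<in>I. (if i \<in> J then f i else g i) \<in> A i"
    using f(2) g(2) by simp
  ultimately show ?thesis
    unfolding has_sdr_def by blast
qed

lemma has_sdr_Diff_singleton:
  assumes "a \<in> A i" and "has_sdr (I - {i}) (\<lambda>j. A j - {a})"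
  shows "has_sdr I A"
proof -
  obtain g where g: "inj_on g (I - {i})" "\<forall>j\<in>I - {i}. g j \<in> A j - {a}"
    using assms(2) unfolding has_sdr_def by blast
  have "inj_on (\<lambda>j. if j \<in> {i} then a else g j) I"
    using g by (intro inj_on_If_disjoint_images) auto
  moreover have "\<forall>j\<in>I. (if j \<in> {i} then a else g j) \<in> A j"
    using g(2) \<open>a \<in> A i\<close> by simp
  ultimately show ?thesis
    unfolding has_sdr_def by blast
qed

theorem hall_marriage:
  assumes "finite I" "\<forall>i\<in>I. finite (A i)" "hall_condition I A"
  shows "has_sdr I A"
  using assms
proof (induction "card I" arbitrary: I A rule: less_induct)
  case less
  show ?case
  proof (cases "\<exists>J. J \<subset> I \<and> J \<noteq> {} \<and> card (\<Union>(A ` J)) = card J")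
    case True
    then obtain J where J: "J \<subset> I" "J \<noteq> {}" and tight: "card (\<Union>(A ` J)) = card J"
      by blast
    have "I - J \<subset> I"
      using J by blast
    then have "card J < card I" "card (I - J) < card I"
      using J(1) less.prems(1) by (auto intro: psubset_card_mono)
    have "finite J" "\<forall>i\<in>J. finite (A i)" "hall_condition J A"
      using J(1) less.prems by (auto intro: rev_finite_subset hall_condition_subset)
    then have "has_sdr J A"
      by (rule less.hyps[OF \<open>card J < card I\<close>])
    have "finite (I - J)" "\<forall>i\<in>I - J. finite (A i - \<Union>(A ` J))"
      using less.prems(1,2) by auto
    moreover have "hall_condition (I - J) (\<lambda>i. A i - \<Union>(A ` J))"
      using less.prems psubset_imp_subset[OF J(1)] tight by (rule hall_condition_Diff_tight)
    ultimately have "has_sdr (I - J) (\<lambda>i. A i - \<Union>(A ` J))"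
      by (rule less.hyps[OF \<open>card (I - J) < card I\<close>])
    with \<open>has_sdr J A\<close> show ?thesis
      by (rule has_sdr_Diff_Union)
  next
    case no_tight: False
    show ?thesis
    proof (cases "I = {}")
      case False
      then obtain i where "i \<in> I" by blast
      then have "A i \<noteq> {}"
        using less.prems(3)[unfolded hall_condition_def, rule_format, of "{i}"] by auto
      then obtain a where "a \<in> A i" by blast
      have "card (I - {i}) < card I"
        using less.prems(1) \<open>i \<in> I\<close> by (rule card_Diff1_less)
      moreover have "finite (I - {i})" "\<forall>j\<in>I - {i}. finite (A j - {a})"
        using less.prems(1,2) by auto
      moreover have "hall_condition (I - {i}) (\<lambda>j. A j - {a})"
        using less.prems(3) no_tight \<open>i \<in> I\<close> by (rule hall_condition_Diff_singleton)
      ultimately have "has_sdr (I - {i}) (\<lambda>j. A j - {a})"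
        by (rule less.hyps)
      with \<open>a \<in> A i\<close> show ?thesis
        by (rule has_sdr_Diff_singleton)
    qed (simp add: has_sdr_def)
  qed
qed

lemma hall_condition_nbhd:
  assumes "finite W" and sym: "\<forall>x y. E x y \<longrightarrow> E y x"
    and expanding: "\<forall>T\<subseteq>W. independent E T \<longrightarrow> card T \<le> card (nbhd W E T)"
  shows "hall_condition W (\<lambda>v. nbhd W E {v})"
  unfolding hall_condition_def
proof (intro allI impI)
  fix X assume "X \<subseteq> W"
  define T where "T = {x \<in> X. \<forall>y\<in>X. \<not> E x y}"
  have "finite X" "T \<subseteq> X"
    using \<open>X \<subseteq> W\<close> \<open>finite W\<close> by (auto simp: T_def intro: rev_finite_subset)
  have "independent E T" "T \<subseteq> W"
    using \<open>X \<subseteq> W\<close> by (auto simp: T_def independent_def)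
  then have "card T \<le> card (nbhd W E T)"
    using expanding by blast
  have "nbhd W E T \<union> (X - T) \<subseteq> nbhd W E X"
    using \<open>X \<subseteq> W\<close> sym by (auto simp: nbhd_def T_def)
  moreover have "nbhd W E T \<inter> (X - T) = {}"
    by (auto simp: nbhd_def T_def)
  moreover have "finite (nbhd W E X)"
    using \<open>finite W\<close> by (simp add: nbhd_def)
  ultimately have "card (nbhd W E T) + card (X - T) \<le> card (nbhd W E X)"
    by (metis card_Un_disjoint card_mono finite_Un rev_finite_subset)
  moreover have "card X = card T + card (X - T)"
    using \<open>finite X\<close> \<open>T \<subseteq> X\<close> by (metis card_Diff_subset card_mono le_add_diff_inverse rev_finite_subset)
  moreover have "(\<Union>v\<in>X. nbhd W E {v}) = nbhd W E X"
    by (auto simp: nbhd_def)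
  ultimately show "card X \<le> card (\<Union>v\<in>X. nbhd W E {v})"
    using \<open>card T \<le> card (nbhd W E T)\<close> by simp
qed

lemma has_edge_odd_cycle_cover_if_expanding:
  assumes "finite W" "\<forall>x y. E x y \<longrightarrow> E y x" "\<forall>v. \<not> E v v"
    and "\<forall>T\<subseteq>W. independent E T \<longrightarrow> card T \<le> card (nbhd W E T)"
  shows "has_edge_odd_cycle_cover E W"
proof -
  have "\<forall>v\<in>W. finite (nbhd W E {v})"
    using \<open>finite W\<close> by (simp add: nbhd_def)
  then have "has_sdr W (\<lambda>v. nbhd W E {v})"
    using \<open>finite W\<close> hall_condition_nbhd[OF assms(1,2,4)] by (intro hall_marriage)
  then obtain f where f: "inj_on f W" "\<forall>v\<in>W. f v \<in> nbhd W E {v}"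
    unfolding has_sdr_def by blast
  define p where "p = perm_restrict f W"
  have "inj_on p W"
    using f(1) by (simp add: p_def perm_restrict_def inj_on_def)
  moreover have "p v \<in> W \<and> E v (p v)" if "v \<in> W" for v
    using f(2) that by (simp add: p_def perm_restrict_def nbhd_def)
  ultimately have "p permutes W" "\<forall>v\<in>W. E v (p v)"
    using \<open>finite W\<close> by (auto intro!: inj_imp_permutes simp: p_def perm_restrict_def)
  with \<open>finite W\<close> assms(3) show ?thesis
    by (intro has_edge_odd_cycle_cover_permutes) auto
qed

lemma nbhd_Diff_singleton: "nbhd (W - {x}) E T = nbhd W E T - {x}"
  by (auto simp: nbhd_def)

lemma nbhd_Un_remainder:
  assumes sym: "\<forall>x y. E x y \<longrightarrow> E y x" and T: "T \<subseteq> V - (S \<union> nbhd V E S)"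
  shows "nbhd V E (S \<union> T) = nbhd V E S \<union> nbhd (V - (S \<union> nbhd V E S)) E T"
  using T sym[rule_format] by (auto simp: nbhd_def)

lemma admissible_Un_remainder:
  assumes sym: "\<forall>x y. E x y \<longrightarrow> E y x" and "admissible V E S"
    and T: "T \<subseteq> V - (S \<union> nbhd V E S)" "T \<inter> isolated_vertices V E = {}" "independent E T"
  shows "admissible V E (S \<union> T)"
proof -
  have "\<not> E s t" "\<not> E t s" if "s \<in> S" "t \<in> T" for s t
    using that T(1) sym by (auto simp: nbhd_def)
  then show ?thesis
    using assms(2) T by (auto simp: admissible_def independent_def)
qed

lemma surplus_Un_remainder:
  assumes "finite V" "\<forall>x y. E x y \<longrightarrow> E y x" "S \<subseteq> V" and T: "T \<subseteq> V - (S \<union> nbhd V E S)"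
  shows "surplus V E (S \<union> T)
    = surplus V E S + int (card T) - int (card (nbhd (V - (S \<union> nbhd V E S)) E T))"
proof -
  have "finite S" "finite T" "finite (nbhd V E S)" "finite (nbhd (V - (S \<union> nbhd V E S)) E T)"
    using assms(1,3) T by (auto intro: rev_finite_subset simp: nbhd_def)
  moreover have "S \<inter> T = {}" "nbhd V E S \<inter> nbhd (V - (S \<union> nbhd V E S)) E T = {}"
    using T by (auto simp: nbhd_def)
  ultimately show ?thesis
    using nbhd_Un_remainder[OF assms(2) T] by (simp add: surplus_def card_Un_disjoint)
qed

lemma card_lt_card_nbhd_remainder:
  assumes "simple_graph V E" "optimal_set V E S"
    and T: "T \<subseteq> V - (S \<union> nbhd V E S)" "T \<inter> isolated_vertices V E = {}" "independent E T"
    and "T \<noteq> {}"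
  shows "card T < card (nbhd (V - (S \<union> nbhd V E S)) E T)"
proof -
  have "finite V" and sym: "\<forall>x y. E x y \<longrightarrow> E y x"
    using assms(1) by (auto simp: simple_graph_def)
  have "admissible V E S"
    using assms(2) by (simp add: optimal_set_def)
  then have adm: "admissible V E (S \<union> T)" and "S \<subseteq> V"
    using admissible_Un_remainder[OF sym _ T] by (auto simp: admissible_def)
  have surplus: "surplus V E (S \<union> T)
      = surplus V E S + int (card T) - int (card (nbhd (V - (S \<union> nbhd V E S)) E T))"
    using \<open>finite V\<close> sym \<open>S \<subseteq> V\<close> T(1) by (rule surplus_Un_remainder)
  have "finite T" "S \<inter> T = {}" "finite S"
    using \<open>finite V\<close> T(1) \<open>S \<subseteq> V\<close> by (auto intro: rev_finite_subset)
  then have "card S < card (S \<union> T)"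
    using \<open>T \<noteq> {}\<close> by (simp add: card_Un_disjoint card_gt_0_iff)
  then have "surplus V E (S \<union> T) < surplus V E S"
    using assms(2) adm unfolding optimal_set_def by (meson le_less not_le)
  then show ?thesis
    using surplus by linarith
qed

theorem lemma2:
  fixes V :: "'a set" and E :: "'a \<Rightarrow> 'a \<Rightarrow> bool" and S :: "'a set"
  assumes "simple_graph V E"
    and "optimal_set V E S"
    and "\<forall>x \<in> V - (S \<union> nbhd V E S). \<exists>y \<in> V - (S \<union> nbhd V E S). E x y"
  shows "has_edge_odd_cycle_cover E (V - (S \<union> nbhd V E S))
    \<and> (\<forall>x \<in> V - (S \<union> nbhd V E S). has_edge_odd_cycle_cover E (V - (S \<union> nbhd V E S) - {x}))"
proof -
  define R where "R = V - (S \<union> nbhd V E S)"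
  have "finite R" and sym: "\<forall>x y. E x y \<longrightarrow> E y x" and loopfree: "\<forall>v. \<not> E v v"
    using assms(1) by (auto simp: simple_graph_def R_def)
  have "R \<inter> isolated_vertices V E = {}"
    using assms(3) by (auto simp: R_def isolated_vertices_def)
  then have expands: "card T < card (nbhd R E T)" if "T \<subseteq> R" "independent E T" "T \<noteq> {}" for T
    using card_lt_card_nbhd_remainder[OF assms(1,2)] that unfolding R_def by blast
  have "card T \<le> card (nbhd (R - {x}) E T)" if "T \<subseteq> R - {x}" "independent E T" for T x
  proof (cases "T = {}")
    case False
    then have "card T < card (nbhd R E T)"
      using expands that by blast
    moreover have "card (nbhd R E T) - 1 \<le> card (nbhd (R - {x}) E T)"
      by (simp add: nbhd_Diff_singleton card_Diff_singleton_if)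
    ultimately show ?thesis
      by linarith
  qed simp
  then have "has_edge_odd_cycle_cover E (R - {x})" for x
    using \<open>finite R\<close> sym loopfree by (intro has_edge_odd_cycle_cover_if_expanding) auto
  moreover have "card T \<le> card (nbhd R E T)" if "T \<subseteq> R" "independent E T" for T
    using expands[OF that] by (cases "T = {}") auto
  then have "has_edge_odd_cycle_cover E R"
    using \<open>finite R\<close> sym loopfree by (intro has_edge_odd_cycle_cover_if_expanding) auto
  ultimately show ?thesis
    unfolding R_def by blast
qed

end
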